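(* Let $\mathfrak H$ be a Hilbert space, $A$ a nonnegative self-adjoint operator in $\mathfrak H$, and let $y\in S_0$ with $\sigma(y)=\alpha$. Then for all $h>0$ and all $k,n\in\mathbb N_0$, $$\|\Delta_h^k y^{(n)}\|_S\le(\alpha h)^k\alpha^n\|y\|_S.$$
   Context: $e^{-At}=\int_0^\infty e^{-\lambda t}dE(\lambda)$, $E$ the spectral measure of $A$. A weak solution of $y'+Ay=0$ on $\mathbb R_+=[0,\infty)$ is a continuous $y:\mathbb R_+\to\mathfrak H$ with $\int_0^ty(s)ds\in\mathcal D(A)$ and $y(t)=-A\int_0^ty(s)ds+y(0)$ for all $t\ge0$. $S$ is the set of weak solutions (each of the form $e^{-At}f$ for a unique $f\in\mathfrak H$), normed by $\|y\|_S=\sup_{t\ge0}\|y(t)\|$. $S_0\subset S$ is the set of weak solutions extending to entire $\mathfrak H$-valued functions $y(z)$ of exponential type, with type $\sigma(y)=\inf\{\beta>0:\exists c,\ \|y(z)\|\le ce^{\beta|z|}\ \forall z\in\mathbb C\}$. For $h>0$, $k\in\mathbb N_0$, $\Delta_h^k=(e^{-Ah}-I)^k=\sum_{j=0}^k(-1)^{k-j}\binom kj e^{-Ajh}$, applied pointwise: $(\Delta_h^kx)(t)=\Delta_h^k x(t)$. *)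

theory Defs
  imports "HOL-Analysis.Analysis"
begin

text \<open>A complex Hilbert space is modelled as a real Hilbert space (real part of the
complex inner product) together with the operator of multiplication by the imaginary
unit, which is a real-linear isometry squaring to minus the identity.\<close>

class complex_hilbert = real_inner + complete_space +
  fixes imult :: "'a \<Rightarrow> 'a"
  assumes imult_add: "imult (x + y) = imult x + imult y"
    and imult_scaleR: "imult (r *\<^sub>R x) = r *\<^sub>R imult x"
    and imult_imult: "imult (imult x) = - x"
    and imult_inner: "inner (imult x) (imult y) = inner x y"

definition scaleC :: "complex \<Rightarrow> 'a::complex_hilbert \<Rightarrow> 'a" where
  "scaleC c x = Re c *\<^sub>R x + Im c *\<^sub>R imult x"

text \<open>A (possibly unbounded) operator is given by its domain D and a function A
(only its values on D matter).\<close>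

definition nonneg_selfadjoint :: "'a::complex_hilbert set \<Rightarrow> ('a \<Rightarrow> 'a) \<Rightarrow> bool" where
  "nonneg_selfadjoint D A \<longleftrightarrow>
     subspace D \<and> closure D = UNIV \<and>
     (\<forall>x\<in>D. \<forall>y\<in>D. A (x + y) = A x + A y) \<and>
     (\<forall>x\<in>D. \<forall>r. A (r *\<^sub>R x) = r *\<^sub>R A x) \<and>
     (\<forall>x\<in>D. imult x \<in> D \<and> A (imult x) = imult (A x)) \<and>
     {y. \<exists>z. \<forall>x\<in>D. inner (A x) y = inner x z} = D \<and>
     (\<forall>x\<in>D. \<forall>y\<in>D. inner (A x) y = inner x (A y)) \<and>
     (\<forall>x\<in>D. inner (A x) x \<ge> 0)"

definition weak_solution :: "'a::complex_hilbert set \<Rightarrow> ('a \<Rightarrow> 'a) \<Rightarrow> (real \<Rightarrow> 'a) \<Rightarrow> bool" where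
  "weak_solution D A y \<longleftrightarrow>
     continuous_on {0..} y \<and>
     (\<forall>t\<ge>0. integral {0..t} y \<in> D \<and> y t = - A (integral {0..t} y) + y 0)"

text \<open>The semigroup: e^{-As} f is the value at s of the weak solution with initial value f.\<close>

definition semigroup :: "'a::complex_hilbert set \<Rightarrow> ('a \<Rightarrow> 'a) \<Rightarrow> real \<Rightarrow> 'a \<Rightarrow> 'a" where
  "semigroup D A s f = (THE v. \<exists>x. weak_solution D A x \<and> x 0 = f \<and> x s = v)"

definition S_norm :: "(real \<Rightarrow> 'a::real_normed_vector) \<Rightarrow> real" where
  "S_norm x = (SUP t\<in>{0..}. norm (x t))"

definition entire :: "(complex \<Rightarrow> 'a::complex_hilbert) \<Rightarrow> bool" where
  "entire Y \<longleftrightarrow> (\<forall>z. \<exists>v. ((\<lambda>w. scaleC (inverse (w - z)) (Y w - Y z)) \<longlongrightarrow> v) (at z))"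

definition exp_type_set :: "(complex \<Rightarrow> 'a::real_normed_vector) \<Rightarrow> real set" where
  "exp_type_set Y = {\<beta>. \<beta> > 0 \<and> (\<exists>c. \<forall>z. norm (Y z) \<le> c * exp (\<beta> * cmod z))}"

definition exp_type :: "(complex \<Rightarrow> 'a::real_normed_vector) \<Rightarrow> real" where
  "exp_type Y = Inf (exp_type_set Y)"

definition entire_ext_exp_type :: "(complex \<Rightarrow> 'a::complex_hilbert) \<Rightarrow> (real \<Rightarrow> 'a) \<Rightarrow> bool" where
  "entire_ext_exp_type Y y \<longleftrightarrow> entire Y \<and> (\<forall>t\<ge>0. Y (complex_of_real t) = y t) \<and> exp_type_set Y \<noteq> {}"

definition S0 :: "'a::complex_hilbert set \<Rightarrow> ('a \<Rightarrow> 'a) \<Rightarrow> (real \<Rightarrow> 'a) set" where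
  "S0 D A = {y. weak_solution D A y \<and> (\<exists>Y. entire_ext_exp_type Y y)}"

fun nth_deriv :: "(real \<Rightarrow> 'a::real_normed_vector) \<Rightarrow> nat \<Rightarrow> real \<Rightarrow> 'a" where
  "nth_deriv y 0 = y"
| "nth_deriv y (Suc n) = (\<lambda>t. vector_derivative (nth_deriv y n) (at t within {0..}))"

definition Delta :: "'a::complex_hilbert set \<Rightarrow> ('a \<Rightarrow> 'a) \<Rightarrow> real \<Rightarrow> nat \<Rightarrow> (real \<Rightarrow> 'a) \<Rightarrow> real \<Rightarrow> 'a" where
  "Delta D A h k x = (\<lambda>t. \<Sum>j\<le>k. ((-1) ^ (k - j) * real (k choose j)) *\<^sub>R semigroup D A (real j * h) (x t))"

end

theory Submission
  imports Defs "HOL-Complex_Analysis.Complex_Analysis"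
begin

text \<open>At each real t \<ge> 0 the derivatives a_j = Y^(n+j)(t) of the entire extension Y of y
lie in the domain of A and satisfy a_(j+1) = -A a_j. By symmetry of A the sequence of norms
|a_j| is log-convex, so |a_1| > \<beta> |a_0| would force |a_N| to grow exponentially faster than
\<beta>^N; but Cauchy's estimate on the circle of radius N/\<beta>, together with Stirling's bound,
shows that |a_N| exceeds \<beta>^N at most polynomially, for every exponential type \<beta> of Y.
Hence |y^(n)(t)| \<le> \<beta>^n |y(t)|. Since e^(-As) shifts solutions in time, the k-th difference
of y^(n) is a k-fold forward difference of step h of Y^(n) along the real axis, and the mean
value inequality trades each difference for a factor h and one more derivative. Finally |y(t)|
is nonincreasing because A is nonnegative, and letting \<beta> decrease to \<alpha> gives the claim.\<close>

instance complex_hilbert \<subseteq> banach ..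

lemma has_vector_derivative_iff_diff_quotient:
  fixes f :: "real \<Rightarrow> 'a::real_normed_vector"
  shows "(f has_vector_derivative v) (at x within S) \<longleftrightarrow>
         ((\<lambda>y. inverse (y - x) *\<^sub>R (f y - f x)) \<longlongrightarrow> v) (at x within S)"
proof -
  have eq: "\<forall>\<^sub>F y in at x within S. norm ((f y - f x) - (y - x) *\<^sub>R v) / norm (y - x)
            = norm (inverse (y - x) *\<^sub>R (f y - f x) - v)"
  proof (rule eventually_at_filter[THEN iffD2], rule always_eventually, intro allI impI)
    fix y assume "y \<noteq> x"
    then have "inverse (y - x) *\<^sub>R (f y - f x) - v = inverse (y - x) *\<^sub>R ((f y - f x) - (y - x) *\<^sub>R v)"
      by (simp add: scaleR_diff_right)
    then show "norm ((f y - f x) - (y - x) *\<^sub>R v) / norm (y - x)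
            = norm (inverse (y - x) *\<^sub>R (f y - f x) - v)"
      by (simp add: divide_inverse abs_inverse mult.commute)
  qed
  have "(f has_vector_derivative v) (at x within S) \<longleftrightarrow>
        ((\<lambda>y. norm ((f y - f x) - (y - x) *\<^sub>R v) / norm (y - x)) \<longlongrightarrow> 0) (at x within S)"
    unfolding has_vector_derivative_def has_derivative_iff_norm
    using bounded_linear_scaleR_left[of v] by simp
  also have "\<dots> \<longleftrightarrow> ((\<lambda>y. norm (inverse (y - x) *\<^sub>R (f y - f x) - v)) \<longlongrightarrow> 0) (at x within S)"
    by (rule tendsto_cong[OF eq])
  also have "\<dots> \<longleftrightarrow> ((\<lambda>y. inverse (y - x) *\<^sub>R (f y - f x)) \<longlongrightarrow> v) (at x within S)"
    by (simp add: tendsto_norm_zero_iff LIM_zero_iff)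
  finally show ?thesis .
qed

lemma Cauchy_if_dist_le_inverse_Suc:
  fixes s :: "nat \<Rightarrow> 'a::metric_space"
  assumes K: "0 \<le> K" and dist: "\<And>m n. dist (s m) (s n) \<le> K * (1 / real (Suc m) + 1 / real (Suc n))"
  shows "Cauchy s"
proof (rule metric_CauchyI)
  fix e :: real assume "0 < e"
  obtain M :: nat where M: "2 * K / e < real M" using reals_Archimedean2 by blast
  have "2 * K < e * real (Suc M)" using M \<open>0 < e\<close> by (simp add: field_simps)
  show "\<exists>M. \<forall>m\<ge>M. \<forall>n\<ge>M. dist (s m) (s n) < e"
  proof (intro exI allI impI)
    fix m n assume "M \<le> m" "M \<le> n"
    then have "1 / real (Suc m) \<le> 1 / real (Suc M)" "1 / real (Suc n) \<le> 1 / real (Suc M)"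
      by (auto simp: divide_simps)
    then have "K * (1 / real (Suc m) + 1 / real (Suc n)) \<le> K * (2 / real (Suc M))"
      using K by (intro mult_left_mono) auto
    also have "\<dots> < e" using \<open>2 * K < e * real (Suc M)\<close> by (simp add: field_simps)
    finally show "dist (s m) (s n) < e" using dist[of m n] by linarith
  qed
qed

lemma tendsto_exists_if_Cauchy_at:
  fixes q :: "complex \<Rightarrow> 'a::banach"
  assumes K: "0 \<le> K"
    and Cauchy: "\<And>w w'. 0 < cmod (w - z) \<Longrightarrow> cmod (w - z) \<le> 1 \<Longrightarrow> 0 < cmod (w' - z) \<Longrightarrow>
      cmod (w' - z) \<le> 1 \<Longrightarrow> norm (q w - q w') \<le> K * (cmod (w - z) + cmod (w' - z))"
  shows "\<exists>L. (q \<longlongrightarrow> L) (at z)"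
proof -
  define s where "s n = q (z + of_real (1 / real (Suc n)))" for n
  have d: "cmod ((z + of_real (1 / real (Suc n))) - z) = 1 / real (Suc n)" for n
    by (simp only: add_diff_cancel_left' norm_of_real) simp
  have "Cauchy s"
  proof (rule Cauchy_if_dist_le_inverse_Suc[OF K])
    fix m n
    have "norm (s m - s n) \<le> K * (cmod ((z + of_real (1 / real (Suc m))) - z)
                                   + cmod ((z + of_real (1 / real (Suc n))) - z))"
      unfolding s_def by (rule Cauchy) (simp_all only: d, simp_all)
    then show "dist (s m) (s n) \<le> K * (1 / real (Suc m) + 1 / real (Suc n))"
      by (simp only: d dist_norm)
  qed
  then obtain L where sL: "s \<longlonglongrightarrow> L" using Cauchy_convergent convergent_def by blast
  have q_near_L: "norm (q w - L) \<le> K * cmod (w - z)" if "0 < cmod (w - z)" "cmod (w - z) \<le> 1" for w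
  proof (rule tendsto_le[OF trivial_limit_sequentially])
    show "(\<lambda>n. norm (q w - s n)) \<longlonglongrightarrow> norm (q w - L)" by (intro tendsto_intros sL)
    have "(\<lambda>n. K * (cmod (w - z) + 1 / real (Suc n))) \<longlonglongrightarrow> K * (cmod (w - z) + 0)"
      by (intro tendsto_intros LIMSEQ_Suc[OF lim_1_over_n])
    then show "(\<lambda>n. K * (cmod (w - z) + 1 / real (Suc n))) \<longlonglongrightarrow> K * cmod (w - z)"
      by simp
    show "\<forall>\<^sub>F n in sequentially. norm (q w - s n) \<le> K * (cmod (w - z) + 1 / real (Suc n))"
    proof (intro always_eventually allI)
      fix n
      have "norm (q w - s n) \<le> K * (cmod (w - z) + cmod ((z + of_real (1 / real (Suc n))) - z))"
        unfolding s_def by (rule Cauchy) (use that in \<open>simp_all only: d, simp_all\<close>)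
      then show "norm (q w - s n) \<le> K * (cmod (w - z) + 1 / real (Suc n))" by (simp only: d)
    qed
  qed
  have "((\<lambda>w. q w - L) \<longlongrightarrow> 0) (at z)"
  proof (rule Lim_null_comparison)
    show "\<forall>\<^sub>F w in at z. norm (q w - L) \<le> K * cmod (w - z)"
      unfolding eventually_at by (rule exI[of _ 1]) (auto intro!: q_near_L simp: dist_norm)
    show "((\<lambda>w. K * cmod (w - z)) \<longlongrightarrow> 0) (at z)"
      by (rule tendsto_eq_intros | simp)+
  qed
  then show ?thesis using LIM_zero_iff by blast
qed

lemma fact_mult_exp_le:
  assumes "1 \<le> M"
  shows "fact M * exp (real M) \<le> exp 1 * real M * real M ^ M"
  using assms
proof (induction M rule: nat_induct_at_least)
  case base then show ?case by simp
next
  case (Suc M)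
  have M: "0 < real M" using Suc.hyps by simp
  have "1 \<le> real (M + 1) * (ln (real (M + 1)) - ln (real M))"
  proof -
    have "ln (real M / real (M + 1)) \<le> real M / real (M + 1) - 1"
      by (rule ln_le_minus_one) (use M in simp)
    then show ?thesis using M by (simp add: ln_div field_simps)
  qed
  then have "exp 1 \<le> exp (real (M + 1) * (ln (real (M + 1)) - ln (real M)))" by simp
  also have "\<dots> = real (M + 1) ^ (M + 1) / real M ^ (M + 1)"
    using M by (simp only: exp_of_nat_mult exp_diff) (simp add: exp_ln power_divide)
  finally have step: "exp 1 * real M ^ (M + 1) \<le> real (M + 1) ^ (M + 1)"
    using M by (simp add: pos_le_divide_eq)
  have "fact (Suc M) * exp (real (Suc M)) = real (Suc M) * (fact M * exp (real M)) * exp 1"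
    by (simp add: exp_add algebra_simps)
  also have "\<dots> \<le> real (Suc M) * (exp 1 * real M * real M ^ M) * exp 1"
    using Suc.IH by (intro mult_right_mono mult_left_mono) auto
  also have "\<dots> = exp 1 * real (Suc M) * (exp 1 * real M ^ (M + 1))" by (simp add: algebra_simps)
  also have "\<dots> \<le> exp 1 * real (Suc M) * real (M + 1) ^ (M + 1)"
    using step by (intro mult_left_mono) auto
  finally show ?case by simp
qed

lemma power_le_linear_imp_le_one:
  fixes r C n :: real
  assumes bound: "\<And>m. r ^ (2 ^ m) \<le> C * (n + 2 ^ m)"
  shows "r \<le> 1"
proof (rule ccontr)
  assume "\<not> r \<le> 1"
  define \<sigma> where "\<sigma> = sqrt r"
  have \<sigma>: "1 < \<sigma>" "r = \<sigma> ^ 2" using \<open>\<not> r \<le> 1\<close> by (simp_all add: \<sigma>_def)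
  define \<delta> where "\<delta> = (\<sigma> - 1) ^ 2"
  have \<delta>: "0 < \<delta>" using \<sigma> by (simp add: \<delta>_def)
  obtain m where m: "max (\<bar>n\<bar> + 1) (2 * \<bar>C\<bar> / \<delta> + 1) < (2::real) ^ m"
    using real_arch_pow[of 2 "max (\<bar>n\<bar> + 1) (2 * \<bar>C\<bar> / \<delta> + 1)"] by auto
  define N :: real where "N = 2 ^ m"
  have N: "\<bar>n\<bar> < N" "2 * \<bar>C\<bar> < \<delta> * N" using m \<delta> by (auto simp: N_def field_simps)
  \<comment> \<open>Bernoulli's inequality gives quadratic growth of \<open>r\<^sup>N = (\<sigma>\<^sup>N)\<^sup>2\<close>.\<close>
  have "N * (\<sigma> - 1) \<le> \<sigma> ^ (2 ^ m)"
    using Bernoulli_inequality[of "\<sigma> - 1" "2 ^ m"] \<sigma> by (simp add: N_def)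
  then have "(N * (\<sigma> - 1)) ^ 2 \<le> (\<sigma> ^ (2 ^ m)) ^ 2" using \<sigma> by (intro power_mono) (auto simp: N_def)
  then have "N ^ 2 * \<delta> \<le> r ^ (2 ^ m)"
    by (simp add: \<sigma> \<delta>_def power_mult_distrib power_mult[symmetric] mult.commute)
  also have "\<dots> \<le> C * (n + N)" using bound[of m] by (simp add: N_def)
  also have "\<dots> \<le> \<bar>C\<bar> * (2 * N)"
    using N by (smt (verit, best) abs_ge_self abs_le_iff abs_mult mult_mono' zero_le_mult_iff)
  also have "\<dots> < N ^ 2 * \<delta>"
    using N by (auto simp: power2_eq_square field_simps mult_strict_left_mono)
  finally show False by simp
qed

lemma norm_power_le_moment:
  fixes a :: "nat \<Rightarrow> 'a::real_inner"
  assumes shift: "\<And>i j. inner (a (Suc i)) (a j) = inner (a i) (a (Suc j))"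
  shows "norm (a 1) ^ (2 ^ m) \<le> norm (a (2 ^ m)) * norm (a 0) ^ (2 ^ m - 1)"
proof -
  have moment: "inner (a i) (a j) = inner (a 0) (a (i + j))" for i j
    by (induction i arbitrary: j) (simp_all add: shift)
  have log_convex: "norm (a N) ^ 2 \<le> norm (a 0) * norm (a (2 * N))" for N
    using moment[of N N] norm_cauchy_schwarz[of "a 0" "a (2 * N)"]
    by (simp add: power2_norm_eq_inner mult_2)
  show ?thesis
  proof (induction m)
    case 0 then show ?case by simp
  next
    case (Suc m)
    define p :: nat where "p = 2 ^ m"
    have p: "1 \<le> p" by (simp add: p_def)
    have "norm (a 1) ^ (2 ^ Suc m) = (norm (a 1) ^ p) ^ 2"
      by (simp add: p_def power_mult[symmetric] mult.commute)
    also have "\<dots> \<le> (norm (a p) * norm (a 0) ^ (p - 1)) ^ 2"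
      using Suc.IH unfolding p_def by (intro power_mono) auto
    also have "\<dots> = norm (a p) ^ 2 * norm (a 0) ^ (2 * p - 2)"
    proof -
      have "(p - 1) * 2 = 2 * p - 2" by simp
      then show ?thesis by (metis power_mult power_mult_distrib)
    qed
    also have "\<dots> \<le> norm (a 0) * norm (a (2 * p)) * norm (a 0) ^ (2 * p - 2)"
      using log_convex[of p] by (intro mult_right_mono) auto
    also have "\<dots> = norm (a (2 * p)) * norm (a 0) ^ (2 * p - 1)"
    proof -
      have "2 * p - 1 = Suc (2 * p - 2)" using p by simp
      then show ?thesis by (simp add: algebra_simps)
    qed
    finally show ?case by (simp add: p_def)
  qed
qed

text \<open>A log-convex sequence whose growth exceeds \<open>\<beta>\<^sup>N\<close> at most polynomially grows at rate at
most \<beta> from its first step on.\<close>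

lemma norm_Suc_le_if_polynomial_growth:
  fixes a :: "nat \<Rightarrow> 'a::real_inner"
  assumes shift: "\<And>i j. inner (a (Suc i)) (a j) = inner (a i) (a (Suc j))"
    and growth: "\<And>N. 1 \<le> N \<Longrightarrow> norm (a N) \<le> K * real (n + N) * \<beta> ^ (n + N)"
    and \<beta>: "0 < \<beta>"
  shows "norm (a 1) \<le> \<beta> * norm (a 0)"
proof (cases "a 0 = 0")
  case True
  then show ?thesis using norm_power_le_moment[of a 1, OF shift] by simp
next
  case False
  define n0 where "n0 = norm (a 0)"
  have n0: "0 < n0" using False by (simp add: n0_def)
  have "norm (a 1) / (\<beta> * n0) \<le> 1"
  proof (rule power_le_linear_imp_le_one[where C = "K * \<beta> ^ n / n0" and n = "real n"])
    fix m
    define N :: nat where "N = 2 ^ m"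
    have N: "1 \<le> N" by (simp add: N_def)
    have "norm (a 1) ^ N \<le> norm (a N) * n0 ^ (N - 1)"
      using norm_power_le_moment[of a m, OF shift] by (simp add: N_def n0_def)
    also have "\<dots> \<le> K * real (n + N) * \<beta> ^ (n + N) * n0 ^ (N - 1)"
      using growth[OF N] n0 by (intro mult_right_mono) auto
    finally have bound: "norm (a 1) ^ N \<le> K * real (n + N) * \<beta> ^ (n + N) * n0 ^ (N - 1)" .
    have "(norm (a 1) / (\<beta> * n0)) ^ N = norm (a 1) ^ N / (\<beta> ^ N * n0 ^ N)"
      by (simp add: power_divide power_mult_distrib)
    also have "\<dots> \<le> K * real (n + N) * \<beta> ^ (n + N) * n0 ^ (N - 1) / (\<beta> ^ N * n0 ^ N)"
      by (rule divide_right_mono[OF bound]) (use n0 \<beta> in simp)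
    also have "\<dots> = K * \<beta> ^ n / n0 * (real n + real N)"
    proof -
      have "n0 ^ N = n0 * n0 ^ (N - 1)" using N by (simp add: power_eq_if)
      then show ?thesis using n0 \<beta> by (simp add: power_add field_simps)
    qed
    finally show "(norm (a 1) / (\<beta> * n0)) ^ 2 ^ m \<le> K * \<beta> ^ n / n0 * (real n + 2 ^ m)"
      by (simp add: N_def)
  qed
  then show ?thesis using n0 \<beta> by (simp add: n0_def divide_le_eq)
qed

lemma finite_difference_Suc:
  fixes G :: "real \<Rightarrow> 'a::real_vector"
  shows "(\<Sum>j\<le>Suc k. ((-1) ^ (Suc k - j) * real (Suc k choose j)) *\<^sub>R G (s + real j * h))
       = (\<Sum>j\<le>k. ((-1) ^ (k - j) * real (k choose j)) *\<^sub>R G (s + h + real j * h))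
       - (\<Sum>j\<le>k. ((-1) ^ (k - j) * real (k choose j)) *\<^sub>R G (s + real j * h))"
proof -
  define g where "g j = G (s + real j * h)" for j
  define c where "c k j = (-1) ^ (k - j) * real (k choose j)" for k j
  have shift: "G (s + h + real j * h) = g (Suc j)" for j by (simp add: g_def algebra_simps)
  have "(\<Sum>j\<le>Suc k. c (Suc k) j *\<^sub>R g j)
      = (-1) ^ Suc k *\<^sub>R g 0 + (\<Sum>j\<le>k. ((-1) ^ (k - j) * real (k choose j)) *\<^sub>R g (Suc j))
        + (\<Sum>j<k. ((-1) ^ (k - j) * real (k choose Suc j)) *\<^sub>R g (Suc j))"
    by (subst sum.atMost_Suc_shift)
       (simp add: c_def distrib_left scaleR_add_left sum.distrib lessThan_Suc_atMost[symmetric])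
  also have "(\<Sum>j<k. ((-1) ^ (k - j) * real (k choose Suc j)) *\<^sub>R g (Suc j))
      = - (\<Sum>j\<in>{1..k}. c k j *\<^sub>R g j)"
  proof -
    have "(\<Sum>j<k. ((-1) ^ (k - j) * real (k choose Suc j)) *\<^sub>R g (Suc j))
        = (\<Sum>j<k. - (c k (Suc j) *\<^sub>R g (Suc j)))"
    proof (rule sum.cong[OF refl])
      fix j assume "j \<in> {..<k}"
      then have "k - j = Suc (k - Suc j)" by auto
      then show "((-1) ^ (k - j) * real (k choose Suc j)) *\<^sub>R g (Suc j) = - (c k (Suc j) *\<^sub>R g (Suc j))"
        by (simp add: c_def)
    qed
    then show ?thesis by (simp add: sum_negf sum.atLeast1_atMost_eq)
  qed
  also have "(\<Sum>j\<in>{1..k}. c k j *\<^sub>R g j) = (\<Sum>j\<le>k. c k j *\<^sub>R g j) - (-1) ^ k *\<^sub>R g 0"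
    by (simp add: c_def atMost_atLeast0 sum.atLeast_Suc_atMost[of 0 k])
  finally show ?thesis by (simp add: shift c_def flip: g_def)
qed

section \<open>The complex inner product\<close>

lemma inner_imult_left: "inner (imult x) v = - inner x (imult (v::'a::complex_hilbert))"
  using imult_inner[of x "imult v"] by (simp add: imult_imult)

lemma inner_imult_self: "inner x (imult (x::'a::complex_hilbert)) = 0"
  using inner_imult_left[of x x] by (simp add: inner_commute)

text \<open>Linear in the first argument, conjugate linear in the second.\<close>

definition cinner :: "'a::complex_hilbert \<Rightarrow> 'a \<Rightarrow> complex" where
  "cinner x v = Complex (inner x v) (inner x (imult v))"

lemma cinner_diff_left: "cinner (x - y) v = cinner x v - cinner y v"
  by (simp add: cinner_def inner_diff_left complex_eq_iff)

lemma cinner_scaleC_left: "cinner (scaleC a x) v = a * cinner x v"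
  by (simp add: cinner_def scaleC_def complex_eq_iff inner_add_left inner_imult_left imult_inner
      imult_imult algebra_simps)

lemma cinner_self: "cinner x x = of_real (norm x ^ 2)"
  by (simp add: cinner_def complex_eq_iff inner_imult_self power2_norm_eq_inner)

lemma scaleC_of_real: "scaleC (of_real r) x = r *\<^sub>R x"
  by (simp add: scaleC_def)

lemma norm_cinner_le: "cmod (cinner x v) \<le> norm x * norm v"
proof -
  define X where "X = inner x v"
  define Y where "Y = inner x (imult v)"
  define w where "w = X *\<^sub>R v + Y *\<^sub>R imult v"
  \<comment> \<open>\<open>w\<close> is the vector \<open>cinner x v \<cdot> v\<close>, whose norm is \<open>|cinner x v| \<cdot> norm v\<close>.\<close>
  have "inner w w = X*X * inner v v + Y*Y * inner (imult v) (imult v) + 2*X*Y*inner v (imult v)"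
    by (simp add: w_def inner_add_left inner_add_right inner_commute[of "imult v" v] algebra_simps)
  also have "\<dots> = (X^2 + Y^2) * inner v v"
    by (simp add: imult_inner inner_imult_self power2_eq_square algebra_simps)
  finally have "norm w = sqrt (X^2 + Y^2) * norm v"
    unfolding norm_eq_sqrt_inner by (simp add: real_sqrt_mult)
  moreover have "inner x w = X^2 + Y^2"
    by (simp add: w_def inner_add_right X_def Y_def power2_eq_square)
  ultimately have "sqrt (X^2 + Y^2) ^ 2 \<le> norm x * norm v * sqrt (X^2 + Y^2)"
    using Cauchy_Schwarz_ineq2[of x w] by (simp add: mult_ac)
  then have "sqrt (X^2 + Y^2) \<le> norm x * norm v"
  proof (cases "sqrt (X^2 + Y^2) = 0")
    case False
    moreover have "0 \<le> sqrt (X^2 + Y^2)" by simp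
    ultimately have "0 < sqrt (X^2 + Y^2)" by linarith
    moreover have "sqrt (X^2 + Y^2) * sqrt (X^2 + Y^2) \<le> (norm x * norm v) * sqrt (X^2 + Y^2)"
      using \<open>sqrt (X^2 + Y^2) ^ 2 \<le> _\<close> by (simp add: power2_eq_square)
    ultimately show ?thesis by (rule mult_right_le_imp_le[rotated])
  qed simp
  then show ?thesis by (simp add: cinner_def cmod_def X_def Y_def)
qed

lemma tendsto_cinner_left: "(f \<longlongrightarrow> a) F \<Longrightarrow> ((\<lambda>x. cinner (f x) v) \<longlongrightarrow> cinner a v) F"
  unfolding cinner_def by (intro tendsto_Complex tendsto_intros)

lemma norm_le_if_cmod_cinner_self_le:
  assumes "cmod (cinner x x) \<le> K * norm x" "0 \<le> K"
  shows "norm x \<le> K"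
proof (cases "x = 0")
  case False
  have "norm x * norm x \<le> K * norm x" using assms by (simp add: cinner_self power2_eq_square norm_mult)
  then show ?thesis using False by simp
qed (use assms in simp)

section \<open>Vector-valued entire functions\<close>

definition cder :: "(complex \<Rightarrow> 'a::complex_hilbert) \<Rightarrow> complex \<Rightarrow> 'a" where
  "cder F z = Lim (at z) (\<lambda>w. scaleC (inverse (w - z)) (F w - F z))"

definition exp_bounded :: "(complex \<Rightarrow> 'a::real_normed_vector) \<Rightarrow> real \<Rightarrow> real \<Rightarrow> bool" where
  "exp_bounded F c \<beta> \<longleftrightarrow> (\<forall>z. norm (F z) \<le> c * exp (\<beta> * cmod z))"

lemma exp_bounded_nonneg: "exp_bounded F c \<beta> \<Longrightarrow> 0 \<le> c"
  unfolding exp_bounded_def using norm_ge_zero[of "F 0"] by (metis exp_zero mult_1_right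
      mult_zero_right norm_zero order_trans)

lemma cder_tendsto:
  assumes "entire F"
  shows "((\<lambda>w. scaleC (inverse (w - z)) (F w - F z)) \<longlongrightarrow> cder F z) (at z)"
proof -
  from assms obtain v where v: "((\<lambda>w. scaleC (inverse (w - z)) (F w - F z)) \<longlongrightarrow> v) (at z)"
    unfolding entire_def by blast
  then show ?thesis unfolding cder_def by (simp add: tendsto_Lim)
qed

lemma cinner_has_field_derivative:
  assumes "entire F"
  shows "((\<lambda>z. cinner (F z) v) has_field_derivative cinner (cder F z) v) (at z)"
proof -
  have "(\<lambda>y. (cinner (F y) v - cinner (F z) v) / (y - z)) =
        (\<lambda>y. cinner (scaleC (inverse (y - z)) (F y - F z)) v)"
    by (simp add: cinner_scaleC_left cinner_diff_left divide_inverse mult.commute)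
  then show ?thesis unfolding has_field_derivative_iff
    by (simp add: tendsto_cinner_left[OF cder_tendsto[OF assms]])
qed

lemma cinner_holomorphic_on: "entire F \<Longrightarrow> (\<lambda>z. cinner (F z) v) holomorphic_on S"
  unfolding holomorphic_on_def field_differentiable_def
  using cinner_has_field_derivative has_field_derivative_at_within by blast

lemma deriv_cinner: "entire F \<Longrightarrow> deriv (\<lambda>z. cinner (F z) v) = (\<lambda>z. cinner (cder F z) v)"
  by (rule ext) (rule DERIV_imp_deriv[OF cinner_has_field_derivative])

lemma higher_deriv_cinner_has_field_derivative:
  assumes "entire F"
  shows "((deriv ^^ n) (\<lambda>z. cinner (F z) v) has_field_derivative
           (deriv ^^ Suc n) (\<lambda>z. cinner (F z) v) u) (at u)"
proof -
  have "(deriv ^^ n) (\<lambda>z. cinner (F z) v) holomorphic_on UNIV"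
    by (rule holomorphic_higher_deriv[OF cinner_holomorphic_on[OF assms]]) simp
  then show ?thesis
    using holomorphic_on_imp_differentiable_at DERIV_deriv_iff_field_differentiable by fastforce
qed

lemma Cauchy_inequality_cinner:
  assumes "entire F" "exp_bounded F c \<beta>" "0 \<le> \<beta>" "0 < r"
  shows "cmod ((deriv ^^ n) (\<lambda>z. cinner (F z) v) u)
           \<le> fact n * (c * exp (\<beta> * (cmod u + r)) * norm v) / r ^ n"
proof (rule Cauchy_inequality)
  show "(\<lambda>z. cinner (F z) v) holomorphic_on ball u r" by (rule cinner_holomorphic_on[OF assms(1)])
  show "continuous_on (cball u r) (\<lambda>z. cinner (F z) v)"
    by (rule holomorphic_on_imp_continuous_on, rule cinner_holomorphic_on[OF assms(1)])
  fix x assume "cmod (u - x) = r"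
  then have "cmod x \<le> cmod u + r" using norm_triangle_sub[of x u] by (simp add: norm_minus_commute)
  then have "exp (\<beta> * cmod x) \<le> exp (\<beta> * (cmod u + r))" using assms(3) by (simp add: mult_left_mono)
  then have "c * exp (\<beta> * cmod x) * norm v \<le> c * exp (\<beta> * (cmod u + r)) * norm v"
    using exp_bounded_nonneg[OF assms(2)] by (intro mult_right_mono mult_left_mono) auto
  moreover have "cmod (cinner (F x) v) \<le> c * exp (\<beta> * cmod x) * norm v"
    using norm_cinner_le[of "F x" v] assms(2) unfolding exp_bounded_def
    by (meson mult_right_mono norm_ge_zero order_trans)
  ultimately show "cmod (cinner (F x) v) \<le> c * exp (\<beta> * (cmod u + r)) * norm v" by linarith
qed (use assms in auto)

lemma exp_bounded_cder:
  assumes "entire F" "exp_bounded F c \<beta>" "0 \<le> \<beta>"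
  shows "exp_bounded (cder F) (c * exp \<beta>) \<beta>"
  unfolding exp_bounded_def
proof
  fix z
  define v where "v = cder F z"
  have "cmod ((deriv ^^ 1) (\<lambda>z. cinner (F z) v) z) \<le> fact 1 * (c * exp (\<beta> * (cmod z + 1)) * norm v) / 1 ^ 1"
    by (rule Cauchy_inequality_cinner[OF assms]) simp
  then have "cmod (cinner v v) \<le> c * exp (\<beta> * (cmod z + 1)) * norm v"
    by (simp add: deriv_cinner[OF assms(1)] v_def)
  then have "norm v \<le> c * exp (\<beta> * (cmod z + 1))"
    by (rule norm_le_if_cmod_cinner_self_le) (use exp_bounded_nonneg[OF assms(2)] in simp)
  then show "norm (cder F z) \<le> c * exp \<beta> * exp (\<beta> * cmod z)"
    by (simp add: v_def distrib_left exp_add mult.assoc mult.commute)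
qed

lemma norm_third_deriv_cinner_le:
  assumes "entire F" "exp_bounded F c \<beta>" "0 \<le> \<beta>" "cmod (u - z) \<le> 1"
  shows "cmod ((deriv ^^ 3) (\<lambda>z. cinner (F z) v) u) \<le> 6 * c * exp (\<beta> * (cmod z + 2)) * norm v"
proof -
  have "cmod ((deriv ^^ 3) (\<lambda>z. cinner (F z) v) u)
          \<le> fact 3 * (c * exp (\<beta> * (cmod u + 1)) * norm v) / 1 ^ 3"
    by (rule Cauchy_inequality_cinner[OF assms(1-3)]) simp
  also have "\<dots> \<le> 6 * c * exp (\<beta> * (cmod z + 2)) * norm v"
  proof -
    have "cmod u \<le> cmod z + 1" using assms(4) norm_triangle_sub[of u z] by simp
    then have "exp (\<beta> * (cmod u + 1)) \<le> exp (\<beta> * (cmod z + 2))"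
      using assms(3) by (simp add: mult_left_mono)
    then show ?thesis using exp_bounded_nonneg[OF assms(2)]
      by (simp add: fact_numeral mult.assoc mult_left_mono mult_right_mono)
  qed
  finally show ?thesis .
qed

text \<open>Second-order Taylor control of the difference quotients of cder in every direction;
by completeness this gives their convergence, i.e. cder is again entire.\<close>

lemma cinner_cder_diff_quotient_approx:
  assumes "entire F" "exp_bounded F c \<beta>" "0 \<le> \<beta>" "0 < cmod (w - z)" "cmod (w - z) \<le> 1"
  shows "cmod (cinner (scaleC (inverse (w - z)) (cder F w - cder F z)) v
              - (deriv ^^ 2) (\<lambda>z. cinner (F z) v) z)
         \<le> (6 * c * exp (\<beta> * (cmod z + 2)) * norm v) * cmod (w - z)"
proof -
  define \<phi> where "\<phi> = (\<lambda>z. cinner (F z) v)"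
  define M where "M = 6 * c * exp (\<beta> * (cmod z + 2)) * norm v"
  define d where "d = cmod (w - z)"
  have deriv_\<phi>: "deriv \<phi> = (\<lambda>u. cinner (cder F u) v)"
    unfolding \<phi>_def by (rule deriv_cinner[OF assms(1)])
  have D2: "((deriv ^^ 1) \<phi> has_field_derivative (deriv ^^ 2) \<phi> u) (at u)" for u
    unfolding \<phi>_def using higher_deriv_cinner_has_field_derivative[OF assms(1), of 1 v u]
    by (simp add: numeral_2_eq_2)
  have D3: "((deriv ^^ 2) \<phi> has_field_derivative (deriv ^^ 3) \<phi> u) (at u)" for u
    unfolding \<phi>_def using higher_deriv_cinner_has_field_derivative[OF assms(1), of 2 v u]
    by (simp add: numeral_3_eq_3)
  have zw: "z \<in> cball z d" "w \<in> cball z d" by (auto simp: d_def dist_norm norm_minus_commute)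
  have M_bound: "cmod ((deriv ^^ 3) \<phi> u) \<le> M" if "u \<in> cball z d" for u
    unfolding \<phi>_def M_def using that assms(5)
    by (intro norm_third_deriv_cinner_le[OF assms(1-3)]) (auto simp: d_def dist_norm norm_minus_commute)
  have second_deriv_near: "cmod ((deriv ^^ 2) \<phi> u - (deriv ^^ 2) \<phi> z) \<le> M * d" if "u \<in> cball z d" for u
  proof -
    have "cmod ((deriv ^^ 2) \<phi> u - (deriv ^^ 2) \<phi> z) \<le> M * cmod (u - z)"
    proof (rule field_differentiable_bound[of "cball z d"])
      show "((deriv ^^ 2) \<phi> has_field_derivative (deriv ^^ 3) \<phi> x) (at x within cball z d)" for x
        using D3 has_field_derivative_at_within by blast
    qed (use that zw M_bound in auto)
    also have "\<dots> \<le> M * d"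
      using that by (intro mult_left_mono) (auto simp: M_def dist_norm norm_minus_commute
          intro!: mult_nonneg_nonneg exp_bounded_nonneg[OF assms(2)])
    finally show ?thesis .
  qed
  define g where "g u = (deriv ^^ 1) \<phi> u - u * (deriv ^^ 2) \<phi> z" for u
  have "cmod (g w - g z) \<le> (M * d) * cmod (w - z)"
  proof (rule field_differentiable_bound[of "cball z d"])
    show "(g has_field_derivative ((deriv ^^ 2) \<phi> x - (deriv ^^ 2) \<phi> z)) (at x within cball z d)" for x
      unfolding g_def by (rule has_field_derivative_at_within)
        (use DERIV_diff[OF D2 DERIV_cmult_right[OF DERIV_ident]] in simp)
  qed (use zw second_deriv_near in auto)
  moreover have "g w - g z = (w - z) * (inverse (w - z) * (cinner (cder F w) v - cinner (cder F z) v)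
                                        - (deriv ^^ 2) \<phi> z)"
    using assms(4) by (simp add: g_def deriv_\<phi> field_simps)
  ultimately have "cmod (inverse (w - z) * (cinner (cder F w) v - cinner (cder F z) v)
                         - (deriv ^^ 2) \<phi> z) \<le> M * d"
    using assms(4) by (simp add: norm_mult d_def)
  then show ?thesis by (simp add: cinner_scaleC_left cinner_diff_left M_def d_def \<phi>_def)
qed

lemma entire_cder:
  assumes "entire F" "exp_bounded F c \<beta>" "0 \<le> \<beta>"
  shows "entire (cder F)"
  unfolding entire_def
proof
  fix z
  define K where "K = 6 * c * exp (\<beta> * (cmod z + 2))"
  have K: "0 \<le> K" using exp_bounded_nonneg[OF assms(2)] by (simp add: K_def)
  define q where "q w = scaleC (inverse (w - z)) (cder F w - cder F z)" for w
  have "\<exists>L. (q \<longlongrightarrow> L) (at z)"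
  proof (rule tendsto_exists_if_Cauchy_at[OF K])
    fix w w' assume h: "0 < cmod (w - z)" "cmod (w - z) \<le> 1" "0 < cmod (w' - z)" "cmod (w' - z) \<le> 1"
    define v where "v = q w - q w'"
    define D2 where "D2 = (deriv ^^ 2) (\<lambda>z. cinner (F z) v) z"
    have "cmod (cinner (q w) v - D2) \<le> (K * norm v) * cmod (w - z)"
      "cmod (cinner (q w') v - D2) \<le> (K * norm v) * cmod (w' - z)"
      unfolding q_def K_def D2_def using cinner_cder_diff_quotient_approx[OF assms] h by simp_all
    moreover have "cinner v v = (cinner (q w) v - D2) - (cinner (q w') v - D2)"
      by (simp add: v_def cinner_diff_left)
    then have "cmod (cinner v v) \<le> cmod (cinner (q w) v - D2) + cmod (cinner (q w') v - D2)"
      using norm_triangle_ineq4[of "cinner (q w) v - D2" "cinner (q w') v - D2"] by simp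
    ultimately have "cmod (cinner v v) \<le> (K * norm v) * cmod (w - z) + (K * norm v) * cmod (w' - z)"
      by linarith
    then have "cmod (cinner v v) \<le> K * (cmod (w - z) + cmod (w' - z)) * norm v"
      by (simp add: algebra_simps)
    then show "norm (q w - q w') \<le> K * (cmod (w - z) + cmod (w' - z))"
      unfolding v_def by (rule norm_le_if_cmod_cinner_self_le) (use K in simp)
  qed
  then show "\<exists>v. ((\<lambda>w. scaleC (inverse (w - z)) (cder F w - cder F z)) \<longlongrightarrow> v) (at z)"
    unfolding q_def .
qed

lemma entire_exp_bounded_cder_funpow:
  assumes "entire F" "exp_bounded F c \<beta>" "0 \<le> \<beta>"
  shows "entire ((cder ^^ n) F) \<and> exp_bounded ((cder ^^ n) F) (c * exp \<beta> ^ n) \<beta>"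
proof (induction n)
  case (Suc n)
  then have "entire (cder ((cder ^^ n) F))"
    "exp_bounded (cder ((cder ^^ n) F)) (c * exp \<beta> ^ n * exp \<beta>) \<beta>"
    using entire_cder exp_bounded_cder assms(3) by blast+
  then show ?case by (simp add: mult_ac)
qed (use assms in simp)

lemma higher_deriv_cinner:
  assumes "entire F" "exp_bounded F c \<beta>" "0 \<le> \<beta>"
  shows "(deriv ^^ n) (\<lambda>z. cinner (F z) v) = (\<lambda>z. cinner ((cder ^^ n) F z) v)"
  by (induction n)
     (simp_all add: deriv_cinner entire_exp_bounded_cder_funpow[OF assms])

text \<open>Cauchy's estimate on the circle of radius \<open>M / \<beta>\<close>, made polynomial in \<open>M\<close> by Stirling.\<close>

lemma norm_cder_funpow_le:
  assumes "entire F" "exp_bounded F c \<beta>" "0 < \<beta>" "1 \<le> M"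
  shows "norm ((cder ^^ M) F u) \<le> c * exp (\<beta> * cmod u) * exp 1 * real M * \<beta> ^ M"
proof -
  define v where "v = (cder ^^ M) F u"
  define r where "r = real M / \<beta>"
  have r: "0 < r" using assms(3,4) by (simp add: r_def)
  have c: "0 \<le> c" by (rule exp_bounded_nonneg[OF assms(2)])
  have "cmod ((deriv ^^ M) (\<lambda>z. cinner (F z) v) u)
          \<le> fact M * (c * exp (\<beta> * (cmod u + r)) * norm v) / r ^ M"
    by (rule Cauchy_inequality_cinner[OF assms(1,2)]) (use assms(3) r in auto)
  then have "cmod (cinner v v) \<le> (fact M * c * exp (\<beta> * (cmod u + r)) / r ^ M) * norm v"
    using assms(3) by (simp add: higher_deriv_cinner[OF assms(1,2)] v_def)
  then have "norm v \<le> fact M * c * exp (\<beta> * (cmod u + r)) / r ^ M"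
    by (rule norm_le_if_cmod_cinner_self_le) (use c r in simp)
  also have "\<dots> = c * exp (\<beta> * cmod u) * \<beta> ^ M * ((fact M * exp (real M)) / real M ^ M)"
  proof -
    have br: "\<beta> * (cmod u + r) = \<beta> * cmod u + real M" using assms(3) by (simp add: r_def field_simps)
    have rM: "r ^ M = real M ^ M / \<beta> ^ M" by (simp add: r_def power_divide)
    have "0 < real M ^ M" using assms(4) by simp
    then show ?thesis unfolding br rM using assms(3) by (simp add: exp_add field_simps)
  qed
  also have "\<dots> \<le> c * exp (\<beta> * cmod u) * \<beta> ^ M * ((exp 1 * real M * real M ^ M) / real M ^ M)"
    using fact_mult_exp_le[OF assms(4)] c assms(3,4)
    by (intro mult_left_mono divide_right_mono) auto
  also have "\<dots> = c * exp (\<beta> * cmod u) * exp 1 * real M * \<beta> ^ M"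
    using assms(4) by (simp add: field_simps)
  finally show ?thesis by (simp add: v_def)
qed

lemma tendsto_diff_quotient_of_real:
  assumes "entire F"
  shows "((\<lambda>s. inverse (s - t) *\<^sub>R (F (of_real s) - F (of_real t))) \<longlongrightarrow> cder F (of_real t))
           (at t within S)"
proof -
  have "filterlim complex_of_real (at (of_real t)) (at t within S)"
    unfolding filterlim_at
    by (auto simp: eventually_at_filter intro!: tendsto_intros)
  from filterlim_compose[OF cder_tendsto[OF assms] this]
  show ?thesis by (simp add: o_def scaleC_of_real flip: of_real_diff of_real_inverse)
qed

lemma has_vector_derivative_of_real:
  "entire F \<Longrightarrow> ((\<lambda>s. F (of_real s)) has_vector_derivative cder F (of_real t)) (at t within S)"
  unfolding has_vector_derivative_iff_diff_quotient by (rule tendsto_diff_quotient_of_real)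

lemma has_vector_derivative_of_real_shift:
  assumes "entire F"
  shows "((\<lambda>s. F (of_real (s + a))) has_vector_derivative cder F (of_real (t + a))) (at t within S)"
proof -
  have "((\<lambda>s. s + a) has_vector_derivative 1) (at t within S)"
    by (auto intro!: derivative_eq_intros)
  from vector_diff_chain_within[OF this has_vector_derivative_of_real[OF assms, of "t + a"]]
  show ?thesis by (simp add: o_def)
qed

section \<open>Nonnegative self-adjoint operators and weak solutions\<close>

lemma weak_solution_cong:
  assumes "\<And>s. 0 \<le> s \<Longrightarrow> x s = x' s"
  shows "weak_solution D A x \<longleftrightarrow> weak_solution D A x'"
proof -
  have "continuous_on {0..} x = continuous_on {0..} x'"
    by (rule continuous_on_cong) (auto simp: assms)
  moreover have "integral {0..t} x = integral {0..t} x'" for t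
    by (rule integral_cong) (simp add: assms)
  ultimately show ?thesis unfolding weak_solution_def using assms by auto
qed

locale nonneg_selfadjoint_operator =
  fixes D :: "'a::complex_hilbert set" and A :: "'a \<Rightarrow> 'a"
  assumes nonneg_selfadjoint: "nonneg_selfadjoint D A"
begin

lemma domain_subspace: "subspace D"
  and add: "x \<in> D \<Longrightarrow> y \<in> D \<Longrightarrow> A (x + y) = A x + A y"
  and scaleR: "x \<in> D \<Longrightarrow> A (r *\<^sub>R x) = r *\<^sub>R A x"
  and domain_eq_adjoint_domain: "{y. \<exists>z. \<forall>x\<in>D. inner (A x) y = inner x z} = D"
  and symmetric: "x \<in> D \<Longrightarrow> y \<in> D \<Longrightarrow> inner (A x) y = inner x (A y)"
  and nonneg: "x \<in> D \<Longrightarrow> inner (A x) x \<ge> 0"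
  and domain_dense: "closure D = UNIV"
  using nonneg_selfadjoint unfolding nonneg_selfadjoint_def by blast+

lemma domain_diff: "x \<in> D \<Longrightarrow> y \<in> D \<Longrightarrow> x - y \<in> D"
  using domain_subspace by (rule subspace_diff)

lemma domain_scaleR: "x \<in> D \<Longrightarrow> r *\<^sub>R x \<in> D"
  using domain_subspace by (simp add: subspace_scale)

lemma zero: "A 0 = 0"
  using scaleR[OF subspace_0[OF domain_subspace], of 0] by simp

lemma diff: "x \<in> D \<Longrightarrow> y \<in> D \<Longrightarrow> A (x - y) = A x - A y"
  using add[of x "- y"] scaleR[of y "- 1"] subspace_neg[OF domain_subspace, of y] by simp

text \<open>Self-adjointness makes the graph of A closed.\<close>

lemma limit_in_domain:
  assumes F: "F \<noteq> bot" and ev: "eventually (\<lambda>s. x s \<in> D) F"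
    and xa: "(x \<longlongrightarrow> a) F" and Axb: "((\<lambda>s. A (x s)) \<longlongrightarrow> b) F"
  shows "a \<in> D \<and> A a = b"
proof -
  have adj: "inner (A z) a = inner z b" if "z \<in> D" for z
  proof -
    have "eventually (\<lambda>s. inner z (A (x s)) = inner (A z) (x s)) F"
      using ev by eventually_elim (use symmetric that in simp)
    with tendsto_inner[OF tendsto_const Axb, of z]
    have "((\<lambda>s. inner (A z) (x s)) \<longlongrightarrow> inner z b) F"
      by (rule Lim_transform_eventually)
    then show ?thesis using tendsto_inner[OF tendsto_const xa] tendsto_unique[OF F] by blast
  qed
  then have aD: "a \<in> D" using domain_eq_adjoint_domain by blast
  have "D \<subseteq> {u. inner (A a - b) u = 0}"
  proof
    fix u assume "u \<in> D"
    then show "u \<in> {u. inner (A a - b) u = 0}"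
      using adj[of u] symmetric[of u a] aD
      by (simp add: inner_diff_left inner_commute[of "A a" u] inner_commute[of b u])
  qed
  then have "closure D \<subseteq> {u. inner (A a - b) u = 0}"
    by (rule closure_minimal) (rule closed_hyperplane)
  then have "inner (A a - b) (A a - b) = 0" using domain_dense by blast
  then show ?thesis using aD by simp
qed

lemma norm_nonincreasing:
  assumes T: "0 \<le> T"
    and u': "\<And>s. s \<in> {0..T} \<Longrightarrow> (u has_vector_derivative - A (u s)) (at s within {0..T})"
    and uD: "\<And>s. s \<in> {0..T} \<Longrightarrow> u s \<in> D"
  shows "norm (u T) \<le> norm (u 0)"
proof -
  define e where "e t = inner (u t) (u t)" for t
  have "(e has_vector_derivative (- 2 * inner (A (u s)) (u s))) (at s within {0..T})"
    if "s \<in> {0..T}" for s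
    unfolding e_def has_vector_derivative_def
    by (rule has_derivative_eq_rhs, rule has_derivative_inner[OF u'[OF that, unfolded
        has_vector_derivative_def] u'[OF that, unfolded has_vector_derivative_def]])
       (auto simp: inner_commute algebra_simps)
  then have "((\<lambda>s. - 2 * inner (A (u s)) (u s)) has_integral e T - e 0) {0..T}"
    by (rule fundamental_theorem_of_calculus[OF T])
  then have "e T - e 0 \<le> 0"
    by (rule has_integral_le[OF _ has_integral_0]) (use nonneg uD in auto)
  then show ?thesis by (simp add: e_def norm_le)
qed

lemma weak_solution_unique:
  assumes w1: "weak_solution D A x1" and w2: "weak_solution D A x2"
    and eq0: "x1 0 = x2 0" and T: "0 \<le> T"
  shows "x1 T = x2 T"
proof -
  define u where "u t = integral {0..t} (\<lambda>s. x1 s - x2 s)" for t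
  have c1: "continuous_on {0..} x1" and c2: "continuous_on {0..} x2"
    using w1 w2 unfolding weak_solution_def by blast+
  have c: "continuous_on {0..} (\<lambda>s. x1 s - x2 s)" by (intro continuous_intros c1 c2)
  have integrable: "x integrable_on {0..t}" if "continuous_on {0..} x" for x :: "real \<Rightarrow> 'a" and t
    by (rule integrable_continuous_interval, rule continuous_on_subset[OF that]) auto
  have uD: "u t \<in> D" and diff_eq: "x1 t - x2 t = - A (u t)" if "0 \<le> t" for t
  proof -
    have "u t = integral {0..t} x1 - integral {0..t} x2"
      unfolding u_def by (rule integral_diff[OF integrable[OF c1] integrable[OF c2]])
    moreover have "integral {0..t} x1 \<in> D" "x1 t = - A (integral {0..t} x1) + x1 0"
      "integral {0..t} x2 \<in> D" "x2 t = - A (integral {0..t} x2) + x2 0"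
      using w1 w2 that unfolding weak_solution_def by blast+
    ultimately show "u t \<in> D" "x1 t - x2 t = - A (u t)"
      using domain_diff diff eq0 by simp_all
  qed
  have "(u has_vector_derivative - A (u s)) (at s within {0..T})" if "s \<in> {0..T}" for s
  proof -
    have "(u has_vector_derivative (x1 s - x2 s)) (at s within {0..T})"
      unfolding u_def by (rule integral_has_vector_derivative[OF continuous_on_subset[OF c] that]) auto
    then show ?thesis using diff_eq[of s] that by simp
  qed
  then have "norm (u T) \<le> norm (u 0)"
    by (rule norm_nonincreasing[OF T]) (use uD in auto)
  then have "u T = 0" by (simp add: u_def)
  then show ?thesis using diff_eq[OF T] zero by simp
qed

lemma semigroup_weak_solution:
  assumes "weak_solution D A x" "0 \<le> s"
  shows "semigroup D A s (x 0) = x s"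
  unfolding semigroup_def
  by (rule the_equality) (use assms weak_solution_unique in blast)+


lemma derivative_in_domain:
  assumes V: "\<And>s. t \<le> s \<Longrightarrow> V s \<in> D" "\<And>s. t \<le> s \<Longrightarrow> A (V s) = C - u s"
    and V': "(V has_vector_derivative u t) (at t within {t..t+1})"
    and u': "(u has_vector_derivative u') (at t within {t..t+1})"
  shows "u t \<in> D \<and> A (u t) = - u'"
proof (rule limit_in_domain[OF trivial_limit_at_right_real])
  define q where "q f s = inverse (s - t) *\<^sub>R (f s - f t)" for f :: "real \<Rightarrow> 'a" and s
  have ev: "\<forall>\<^sub>F s in at_right t. t < s" by (simp add: eventually_at_right_less)
  show "\<forall>\<^sub>F s in at_right t. q V s \<in> D"
    using ev by eventually_elim (use V domain_diff domain_scaleR in \<open>simp add: q_def\<close>)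
  show "(q V \<longlongrightarrow> u t) (at_right t)"
    using V' unfolding has_vector_derivative_iff_diff_quotient q_def
    by (simp add: at_within_Icc_at_right)
  have "\<forall>\<^sub>F s in at_right t. - q u s = A (q V s)"
    using ev
  proof eventually_elim
    case (elim s)
    then have Vst: "V s \<in> D" "V t \<in> D" using V(1) by auto
    then have "A (q V s) = inverse (s - t) *\<^sub>R (A (V s) - A (V t))"
      unfolding q_def by (simp only: scaleR domain_diff diff)
    also have "\<dots> = - q u s" using V(2) elim by (simp add: q_def scaleR_diff_right)
    finally show ?case by simp
  qed
  moreover have "((\<lambda>s. - q u s) \<longlongrightarrow> - u') (at_right t)"
    using u' unfolding has_vector_derivative_iff_diff_quotient q_def
    by (intro tendsto_minus) (simp add: at_within_Icc_at_right)
  ultimately show "((\<lambda>s. A (q V s)) \<longlongrightarrow> - u') (at_right t)"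
    by (rule Lim_transform_eventually[rotated])
qed

lemma weak_solution_of_antiderivative:
  assumes u: "continuous_on {0..} u"
    and V': "\<And>s. 0 \<le> s \<Longrightarrow> (V has_vector_derivative u s) (at s)"
    and V: "\<And>s. 0 \<le> s \<Longrightarrow> V s \<in> D" "\<And>s. 0 \<le> s \<Longrightarrow> A (V s) = C - u s"
  shows "weak_solution D A u"
  unfolding weak_solution_def
proof (intro conjI[OF u] allI impI)
  fix r :: real assume r: "0 \<le> r"
  have "(u has_integral V r - V 0) {0..r}"
    by (rule fundamental_theorem_of_calculus[OF r])
       (auto intro: has_vector_derivative_within_subset[OF V'])
  then have "integral {0..r} u = V r - V 0" by (rule integral_unique)
  then show "integral {0..r} u \<in> D \<and> u r = - A (integral {0..r} u) + u 0"
    using V r by (simp add: domain_diff diff)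
qed

lemma weak_solution_shift:
  assumes y: "weak_solution D A y" and t: "0 \<le> t"
  shows "weak_solution D A (\<lambda>s. y (t + s))"
proof -
  define I where "I s = integral {0..s} y" for s
  have cy: "continuous_on {0..} y" using y unfolding weak_solution_def by blast
  have I: "I s \<in> D" "A (I s) = y 0 - y s" if "0 \<le> s" for s
    using y that unfolding weak_solution_def I_def by (auto simp: algebra_simps)
  have "continuous_on {0..} (\<lambda>s. y (t + s))"
    by (rule continuous_on_compose2[OF cy]) (use t in \<open>auto intro!: continuous_intros\<close>)
  moreover have "integral {0..r} (\<lambda>s. y (t + s)) \<in> D \<and>
      y (t + r) = - A (integral {0..r} (\<lambda>s. y (t + s))) + y (t + 0)" if r: "0 \<le> r" for r
  proof -
    have "integral {0..r} (\<lambda>s. y (t + s)) = integral {t..t+r} y"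
      using integral_shift_real_ivl[of t t "t + r" y] by (simp add: add.commute)
    also have "\<dots> = I (t + r) - I t"
      using Henstock_Kurzweil_Integration.integral_combine[of 0 t "t + r" y] t r
        integrable_continuous_interval[OF continuous_on_subset[OF cy, of "{0..t+r}"]]
      by (simp add: I_def algebra_simps)
    finally show ?thesis using I[of "t + r"] I[OF t] t r by (simp add: domain_diff diff)
  qed
  ultimately show ?thesis unfolding weak_solution_def by simp
qed

end

section \<open>Entire solutions of exponential type\<close>

locale entire_solution = nonneg_selfadjoint_operator +
  fixes y :: "real \<Rightarrow> 'a::complex_hilbert" and Y :: "complex \<Rightarrow> 'a" and c \<beta> :: real
  assumes weak_solution: "weak_solution D A y"
    and entire: "entire Y"
    and extends: "\<And>t. 0 \<le> t \<Longrightarrow> Y (of_real t) = y t"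
    and exp_bounded: "exp_bounded Y c \<beta>"
    and type_pos: "0 < \<beta>"
begin

lemma entire_cder_funpow: "entire ((cder ^^ n) Y)"
  using entire_exp_bounded_cder_funpow[OF entire exp_bounded] type_pos by auto

lemma cder_funpow_in_domain:
  "0 \<le> t \<Longrightarrow> (cder ^^ n) Y (of_real t) \<in> D \<and>
     A ((cder ^^ n) Y (of_real t)) = - (cder ^^ Suc n) Y (of_real t)"
proof (induction n arbitrary: t)
  case 0
  define I where "I s = integral {0..s} y" for s
  have cy: "continuous_on {0..t+1} y"
    using weak_solution continuous_on_subset unfolding weak_solution_def by fastforce
  have "y t \<in> D \<and> A (y t) = - cder Y (of_real t)"
  proof (rule derivative_in_domain)
    show "I s \<in> D" "A (I s) = y 0 - y s" if "t \<le> s" for s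
      using weak_solution that 0 unfolding weak_solution_def I_def by (auto simp: algebra_simps)
    show "(I has_vector_derivative y t) (at t within {t..t+1})"
      unfolding I_def
      by (rule has_vector_derivative_within_subset[OF integral_has_vector_derivative[OF cy]])
         (use 0 in auto)
    have "((\<lambda>s. Y (of_real s)) has_vector_derivative cder Y (of_real t)) (at t within {t..t+1})"
      by (rule has_vector_derivative_of_real[OF entire])
    then show "(y has_vector_derivative cder Y (of_real t)) (at t within {t..t+1})"
      by (rule has_vector_derivative_transform[rotated 2]) (use 0 extends in auto)
  qed
  then show ?case using extends[OF 0] by simp
next
  case (Suc n)
  show ?case
  proof (rule derivative_in_domain[where V = "\<lambda>s. (cder ^^ n) Y (of_real s)" and C = 0
        and u = "\<lambda>s. (cder ^^ Suc n) Y (of_real s)"])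
    show "(cder ^^ n) Y (of_real s) \<in> D" "A ((cder ^^ n) Y (of_real s)) = 0 - (cder ^^ Suc n) Y (of_real s)"
      if "t \<le> s" for s
      using Suc that by auto
  qed (use has_vector_derivative_of_real[OF entire_cder_funpow[of n]]
        has_vector_derivative_of_real[OF entire_cder_funpow[of "Suc n"]] in simp_all)
qed

lemma norm_solution_nonincreasing:
  assumes "0 \<le> t" shows "norm (y t) \<le> norm (y 0)"
proof -
  have "norm (Y (of_real t)) \<le> norm (Y (of_real 0))"
  proof (rule norm_nonincreasing[OF assms])
    fix s assume "s \<in> {0..t}"
    then show "Y (of_real s) \<in> D"
      and "((\<lambda>s. Y (of_real s)) has_vector_derivative - A (Y (of_real s))) (at s within {0..t})"
      using cder_funpow_in_domain[of s 0] has_vector_derivative_of_real[OF entire] by auto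
  qed
  then show ?thesis using extends[of 0] extends[OF assms] by simp
qed

lemma norm_le_S_norm: "0 \<le> t \<Longrightarrow> norm (y t) \<le> S_norm y"
  unfolding S_norm_def by (rule cSUP_upper) (auto intro!: bdd_aboveI2 norm_solution_nonincreasing)

lemma norm_cder_funpow_Suc_le:
  assumes t: "0 \<le> t"
  shows "norm ((cder ^^ Suc n) Y (of_real t)) \<le> \<beta> * norm ((cder ^^ n) Y (of_real t))"
proof -
  define a where "a j = (cder ^^ (n + j)) Y (of_real t)" for j
  have aD: "a j \<in> D" and a_Suc: "a (Suc j) = - A (a j)" for j
    using cder_funpow_in_domain[OF t, of "n + j"] by (simp_all add: a_def)
  have "norm (a 1) \<le> \<beta> * norm (a 0)"
  proof (rule norm_Suc_le_if_polynomial_growth[OF _ _ type_pos])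
    show "inner (a (Suc i)) (a j) = inner (a i) (a (Suc j))" for i j
      by (simp add: a_Suc symmetric aD)
    show "norm (a N) \<le> c * exp (\<beta> * t) * exp 1 * real (n + N) * \<beta> ^ (n + N)" if "1 \<le> N" for N
      using norm_cder_funpow_le[OF entire exp_bounded type_pos, of "n + N" "of_real t"] that t
      by (simp add: a_def)
  qed
  then show ?thesis by (simp add: a_def)
qed

lemma norm_cder_funpow_le_S_norm:
  "0 \<le> t \<Longrightarrow> norm ((cder ^^ n) Y (of_real t)) \<le> \<beta> ^ n * S_norm y"
proof (induction n)
  case 0
  then show ?case using extends norm_le_S_norm by simp
next
  case (Suc n)
  have "norm ((cder ^^ Suc n) Y (of_real t)) \<le> \<beta> * norm ((cder ^^ n) Y (of_real t))"
    by (rule norm_cder_funpow_Suc_le[OF Suc.prems])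
  also have "\<dots> \<le> \<beta> * (\<beta> ^ n * S_norm y)"
    using Suc type_pos by (intro mult_left_mono) auto
  finally show ?case by simp
qed

lemma nth_deriv_eq_cder_funpow: "0 \<le> t \<Longrightarrow> nth_deriv y n t = (cder ^^ n) Y (of_real t)"
proof (induction n arbitrary: t)
  case 0
  then show ?case using extends by simp
next
  case (Suc n)
  have "((\<lambda>s. (cder ^^ n) Y (of_real s)) has_vector_derivative (cder ^^ Suc n) Y (of_real t))
          (at t within {0..})"
    using has_vector_derivative_of_real[OF entire_cder_funpow] by simp
  then have "(nth_deriv y n has_vector_derivative (cder ^^ Suc n) Y (of_real t)) (at t within {0..})"
    by (rule has_vector_derivative_transform[rotated 2]) (use Suc in auto)
  moreover have "at_right t \<le> at t within {0..}"
    by (rule at_le) (use Suc.prems in auto)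
  then have "at t within {0..} \<noteq> bot"
    using trivial_limit_at_right_real by (metis bot_unique)
  ultimately show ?case by (simp add: vector_derivative_within)
qed

lemma weak_solution_cder_funpow_shift:
  assumes t: "0 \<le> t"
  shows "weak_solution D A (\<lambda>s. (cder ^^ n) Y (of_real (t + s)))"
proof (cases n)
  case 0
  have "weak_solution D A (\<lambda>s. Y (of_real (t + s))) \<longleftrightarrow> weak_solution D A (\<lambda>s. y (t + s))"
    by (rule weak_solution_cong) (rule extends, use t in simp)
  then show ?thesis using weak_solution_shift[OF weak_solution t] by (simp add: 0)
next
  case (Suc m)
  have d: "((\<lambda>s. (cder ^^ k) Y (of_real (t + s))) has_vector_derivative
            (cder ^^ Suc k) Y (of_real (t + s))) (at s)" for k s
    using has_vector_derivative_of_real_shift[OF entire_cder_funpow, of k t s UNIV]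
    by (simp add: add.commute)
  show ?thesis unfolding Suc
  proof (rule weak_solution_of_antiderivative[where C = 0])
    show "continuous_on {0..} (\<lambda>s. (cder ^^ Suc m) Y (of_real (t + s)))"
      by (rule continuous_at_imp_continuous_on) (use d has_vector_derivative_continuous in blast)
    show "((\<lambda>s. (cder ^^ m) Y (of_real (t + s))) has_vector_derivative
            (cder ^^ Suc m) Y (of_real (t + s))) (at s)" for s
      by (rule d)
    show "(cder ^^ m) Y (of_real (t + s)) \<in> D"
      "A ((cder ^^ m) Y (of_real (t + s))) = 0 - (cder ^^ Suc m) Y (of_real (t + s))"
      if "0 \<le> s" for s
      using cder_funpow_in_domain[of "t + s" m] t that by simp_all
  qed
qed

definition finite_diff :: "real \<Rightarrow> nat \<Rightarrow> nat \<Rightarrow> real \<Rightarrow> 'a" where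
  "finite_diff h k n s =
     (\<Sum>j\<le>k. ((-1) ^ (k - j) * real (k choose j)) *\<^sub>R (cder ^^ n) Y (of_real (s + real j * h)))"

lemma Delta_eq_finite_diff:
  assumes h: "0 < h" and t: "0 \<le> t"
  shows "Delta D A h k (nth_deriv y n) t = finite_diff h k n t"
  unfolding Delta_def finite_diff_def
  using semigroup_weak_solution[OF weak_solution_cder_funpow_shift[OF t, of n], of "real j * h" for j]
    nth_deriv_eq_cder_funpow[OF t] h
  by (intro sum.cong) auto

lemma finite_diff_Suc: "finite_diff h (Suc k) n s = finite_diff h k n (s + h) - finite_diff h k n s"
  unfolding finite_diff_def by (rule finite_difference_Suc)

lemma has_vector_derivative_finite_diff:
  "(finite_diff h k n has_vector_derivative finite_diff h k (Suc n) s) (at s within S)"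
  unfolding finite_diff_def
proof (intro has_vector_derivative_sum)
  fix j
  show "((\<lambda>s. ((-1) ^ (k - j) * real (k choose j)) *\<^sub>R (cder ^^ n) Y (of_real (s + real j * h)))
      has_vector_derivative
        ((-1) ^ (k - j) * real (k choose j)) *\<^sub>R (cder ^^ Suc n) Y (of_real (s + real j * h)))
      (at s within S)"
  proof (rule bounded_linear.has_vector_derivative[OF bounded_linear_scaleR_right])
    show "((\<lambda>s. (cder ^^ n) Y (of_real (s + real j * h))) has_vector_derivative
        (cder ^^ Suc n) Y (of_real (s + real j * h))) (at s within S)"
      using has_vector_derivative_of_real_shift[OF entire_cder_funpow[of n], of "real j * h" s S]
      by simp
  qed
qed

lemma norm_finite_diff_le:
  assumes h: "0 < h"
  shows "0 \<le> t \<Longrightarrow> norm (finite_diff h k n t) \<le> (\<beta> * h) ^ k * \<beta> ^ n * S_norm y"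
proof (induction k arbitrary: n t)
  case 0
  then show ?case using norm_cder_funpow_le_S_norm by (simp add: finite_diff_def)
next
  case (Suc k)
  define B where "B = (\<beta> * h) ^ k * \<beta> ^ Suc n * S_norm y"
  have "norm (finite_diff h k n (t + h) - finite_diff h k n t) \<le> B * norm ((t + h) - t)"
  proof (rule differentiable_bound[of "{t..t+h}"])
    show "(finite_diff h k n has_derivative (\<lambda>x. x *\<^sub>R finite_diff h k (Suc n) s)) (at s within {t..t+h})" for s
      using has_vector_derivative_finite_diff unfolding has_vector_derivative_def by blast
    show "onorm (\<lambda>x. x *\<^sub>R finite_diff h k (Suc n) s) \<le> B" if "s \<in> {t..t+h}" for s
      using Suc.IH[of s "Suc n"] that Suc.prems h
      by (simp add: B_def onorm_scaleR_left onorm_id bounded_linear_ident)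
  qed (use h in auto)
  then show ?case using h by (simp add: finite_diff_Suc B_def algebra_simps)
qed

lemma S_norm_Delta_le:
  assumes h: "0 < h"
  shows "S_norm (Delta D A h k (nth_deriv y n)) \<le> (\<beta> * h) ^ k * \<beta> ^ n * S_norm y"
  unfolding S_norm_def[of "Delta D A h k (nth_deriv y n)"]
  by (rule cSUP_least) (auto simp: Delta_eq_finite_diff[OF h] norm_finite_diff_le[OF h])

end

lemma exp_type_nonneg: "exp_type_set Y \<noteq> {} \<Longrightarrow> 0 \<le> exp_type Y"
  unfolding exp_type_def by (rule cInf_greatest) (auto simp: exp_type_set_def)

lemma exp_bounded_if_exp_type_less:
  assumes "exp_type_set Y \<noteq> {}" "exp_type Y < \<beta>"
  shows "\<exists>c. exp_bounded Y c \<beta>"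
proof -
  obtain \<beta>' c where "\<beta>' < \<beta>" "0 < \<beta>'" and c: "\<forall>z. norm (Y z) \<le> c * exp (\<beta>' * cmod z)"
    using cInf_lessD[OF assms(1), of \<beta>] assms(2) unfolding exp_type_def exp_type_set_def by auto
  then have "exp_bounded Y c \<beta>'" by (simp add: exp_bounded_def)
  then have "norm (Y z) \<le> c * exp (\<beta> * cmod z)" for z
    using c[rule_format, of z] exp_bounded_nonneg \<open>\<beta>' < \<beta>\<close>
    by (smt (verit) mult_left_mono mult_right_mono exp_le_cancel_iff norm_ge_zero)
  then show ?thesis unfolding exp_bounded_def by blast
qed

theorem lemma1:
  fixes D :: "'a::complex_hilbert set" and A :: "'a \<Rightarrow> 'a"
    and y :: "real \<Rightarrow> 'a" and Y :: "complex \<Rightarrow> 'a" and \<alpha> h :: real and k n :: nat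
  assumes "nonneg_selfadjoint D A"
    and "y \<in> S0 D A"
    and "entire_ext_exp_type Y y"
    and "\<alpha> = exp_type Y"
    and "h > 0"
  shows "S_norm (Delta D A h k (nth_deriv y n)) \<le> (\<alpha> * h) ^ k * \<alpha> ^ n * S_norm y"
proof -
  have Y: "entire Y" "\<And>t. 0 \<le> t \<Longrightarrow> Y (of_real t) = y t" "exp_type_set Y \<noteq> {}"
    using assms(3) unfolding entire_ext_exp_type_def by auto
  have bound: "S_norm (Delta D A h k (nth_deriv y n)) \<le> (\<beta> * h) ^ k * \<beta> ^ n * S_norm y" if \<beta>: "\<alpha> < \<beta>" for \<beta>
  proof -
    obtain c where "exp_bounded Y c \<beta>"
      using exp_bounded_if_exp_type_less[OF Y(3)] \<beta> assms(4) by blast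
    then interpret entire_solution D A y Y c \<beta>
      using assms(1,2) Y exp_type_nonneg[OF Y(3)] \<beta> assms(4)
      by unfold_locales (auto simp: S0_def)
    show ?thesis by (rule S_norm_Delta_le[OF assms(5)])
  qed
  have "\<forall>\<^sub>F \<beta> in at_right \<alpha>.
      S_norm (Delta D A h k (nth_deriv y n)) \<le> (\<beta> * h) ^ k * \<beta> ^ n * S_norm y"
    using eventually_at_right_less[of \<alpha>] by (rule eventually_mono) (rule bound)
  moreover have "((\<lambda>\<beta>. (\<beta> * h) ^ k * \<beta> ^ n * S_norm y) \<longlongrightarrow> (\<alpha> * h) ^ k * \<alpha> ^ n * S_norm y) (at_right \<alpha>)"
    by (intro tendsto_intros)
  ultimately show ?thesis
    by (intro tendsto_lowerbound[OF _ _ trivial_limit_at_right_real])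
qed

end
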